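(* The map $\operatorname{sDet}$ defines a strict monoidal functor $\mathcal{C}\to\mathcal{D}$ which is an equivalence of monoidal categories.
   Context: For $i\in\mathbb{N}$ let $V_i\cong\mathbb{C}^2$ with orthonormal basis $v_{i,0},v_{i,1}$; for a finite ordered index list $A$ put $V_A=\bigotimes_{i\in A}V_i$ ($V_\emptyset=\mathbb{C}$). For $I\subseteq A$ let $|I\rangle=\bigotimes_{i\in A}v_{i,\chi(i,I)}$, $\langle I|=\bigotimes_{i\in A}v^*_{i,\chi(i,I)}$, with $\chi(i,I)=1$ if $i\in I$ and $0$ otherwise. For a complex matrix $X$ with rows labeled by $R$ and columns by $S$, $\operatorname{sDet}(X)=\sum_{I\subseteq R,\,J\subseteq S}\det(X_{I,J})|I\rangle\langle J|$ ($X_{I,J}$ the submatrix on rows $I$, columns $J$; $\det$ of the $0\times 0$ matrix is $1$, of non-square matrices $0$); on objects $\operatorname{sDet}(A)=V_A$. $\mathcal{C}$: objects finite ordered subsets of $\mathbb{N}$ (possibly with repetitions), monoidal product union, unit $\emptyset$; morphisms complex matrices with rows and columns labeled by the two objects; composition is matrix product along the common label set; monoidal product of morphisms is direct sum of labeled matrices; associator and unitors are identities. $\mathcal{D}$: the monoidal subcategory of $\mathrm{Vect}_\mathbb{C}$ with objects $V_A$ and morphisms generated by all $\operatorname{sDet}(X)$ under composition (contraction along shared labels) and tensor product. *)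

theory Defs
  imports "Jordan_Normal_Form.DL_Submatrix" "Jordan_Normal_Form.Determinant"
begin

text \<open>Objects of both categories: finite ordered lists of labels in nat (repetitions allowed).
 Tensor factors / matrix rows and columns are indexed by positions 0..<length A.
 A morphism A -> B of C is a complex matrix with rows labelled by B and columns labelled by A.\<close>

definition C_hom :: "nat list \<Rightarrow> nat list \<Rightarrow> complex mat set" where
  "C_hom A B = carrier_mat (length B) (length A)"

definition C_tensor :: "complex mat \<Rightarrow> complex mat \<Rightarrow> complex mat" where
  "C_tensor X Y = four_block_mat X (0\<^sub>m (dim_row X) (dim_col Y)) (0\<^sub>m (dim_row Y) (dim_col X)) Y"

text \<open>A linear map V_A -> V_B is represented by its matrix in the bases |I>, I a set of
 positions of B (rows) resp. of A (columns): a kernel nat set => nat set => complex.\<close>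

type_synonym kernel = "nat set \<Rightarrow> nat set \<Rightarrow> complex"

definition sDet :: "complex mat \<Rightarrow> kernel" where
  "sDet X = (\<lambda>I J. if I \<subseteq> {..<dim_row X} \<and> J \<subseteq> {..<dim_col X}
      then (if card I = card J then det (submatrix X I J) else 0) else 0)"

definition D_id :: "nat list \<Rightarrow> kernel" where
  "D_id A = (\<lambda>I J. if I = J \<and> I \<subseteq> {..<length A} then 1 else 0)"

definition D_comp :: "nat list \<Rightarrow> kernel \<Rightarrow> kernel \<Rightarrow> kernel" where
  "D_comp B g f = (\<lambda>I K. \<Sum>J\<in>Pow {..<length B}. g I J * f J K)"

text \<open>Tensor product of f : V_A -> V_B and g : V_A' -> V_B' as a map V_(A@A') -> V_(B@B').\<close>
definition D_tensor :: "nat list \<Rightarrow> nat list \<Rightarrow> kernel \<Rightarrow> kernel \<Rightarrow> kernel" where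
  "D_tensor A B f g = (\<lambda>I K.
     f (I \<inter> {..<length B}) (K \<inter> {..<length A}) *
     g ((\<lambda>i. i - length B) ` (I - {..<length B})) ((\<lambda>k. k - length A) ` (K - {..<length A})))"

inductive_set D_mor :: "(nat list \<times> nat list \<times> kernel) set" where
  gen: "X \<in> C_hom A B \<Longrightarrow> (A, B, sDet X) \<in> D_mor"
| comp: "(A, B, f) \<in> D_mor \<Longrightarrow> (B, C, g) \<in> D_mor \<Longrightarrow> (A, C, D_comp B g f) \<in> D_mor"
| tens: "(A, B, f) \<in> D_mor \<Longrightarrow> (A', B', g) \<in> D_mor \<Longrightarrow>
         (A @ A', B @ B', D_tensor A B f g) \<in> D_mor"

end

(*
  The matrix sDet X collects all minors of X, i.e. it is the matrix of the exterior power of X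
  in the bases |I>. Functoriality is the Cauchy-Binet formula: a minor of X * Y is the sum over
  intermediate index sets J of products of minors of X and of Y. Strict monoidality holds because
  a minor of a block-diagonal matrix splits into a minor of each block (and vanishes when the
  blocks of the submatrix are not square), and identities go to identities because the only
  non-zero minors of the identity matrix are the principal ones, all equal to 1.
  The functor is faithful since the entries of X are its 1 x 1 minors, and full since by
  functoriality the image of sDet is already closed under composition and tensor products.
*)
theory Submission
  imports Defs "Jordan_Normal_Form.DL_Rank_Submatrix"
begin

section \<open>Increasing enumerations of finite sets\<close>

lemma strict_mono_on_pick: "strict_mono_on {0..<card S} (pick S)"
  by (intro strict_mono_onI pick_mono_le) auto

lemma inj_on_pick: "inj_on (pick S) {0..<card S}"
  by (rule strict_mono_on_imp_inj_on[OF strict_mono_on_pick])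

lemma pick_image:
  assumes "finite S" shows "pick S ` {0..<card S} = S"
proof
  show "pick S ` {0..<card S} \<subseteq> S"
    by (rule image_subsetI) (simp add: pick_in_set_le)
  show "S \<subseteq> pick S ` {0..<card S}"
  proof
    fix x assume x: "x \<in> S"
    have "{a\<in>S. a < x} \<subset> S" using x by blast
    hence "card {a\<in>S. a < x} < card S" using assms psubset_card_mono by blast
    thus "x \<in> pick S ` {0..<card S}"
      by (intro image_eqI[where f = "pick S", OF pick_card_in_set[OF x, symmetric]]) simp
  qed
qed

lemma pick_eq_strict_mono_enum:
  assumes mono: "strict_mono_on {0..<k} g" and img: "g ` {0..<k} = I" and r: "r < k"
  shows "pick I r = g r"
proof -
  have "{a\<in>I. a < g r} = g ` {0..<r}"
  proof (intro equalityI subsetI)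
    fix a assume "a \<in> {a\<in>I. a < g r}"
    then obtain x where x: "x < k" "a = g x" "g x < g r" using img by auto
    have "\<not> r \<le> x"
      using x r strict_mono_on_leD[OF mono, of r x] by auto
    thus "a \<in> g ` {0..<r}" using x by auto
  next
    fix a assume "a \<in> g ` {0..<r}"
    then obtain x where "x < r" "a = g x" by auto
    thus "a \<in> {a\<in>I. a < g r}" using img r strict_mono_onD[OF mono, of x r] by auto
  qed
  moreover have "inj_on g {0..<r}"
    using strict_mono_on_imp_inj_on[OF monotone_on_subset[OF mono, of "{0..<r}"]] r by auto
  ultimately have "card {a\<in>I. a < g r} = r" by (simp add: card_image)
  moreover have "g r \<in> I" using img r by auto
  ultimately show ?thesis using pick_card_in_set by metis
qed

abbreviation lower_part :: "nat \<Rightarrow> nat set \<Rightarrow> nat set" where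
  "lower_part p I \<equiv> I \<inter> {..<p}"

abbreviation upper_part :: "nat \<Rightarrow> nat set \<Rightarrow> nat set" where
  "upper_part p I \<equiv> (\<lambda>i. i - p) ` (I - {..<p})"

lemma upper_part_shift: "(\<lambda>i. i + p) ` upper_part p I = I - {..<p}"
  by (force simp: image_image intro: image_eqI[where x = "_ - p"])

lemma bounded_if_upper_part_bounded:
  assumes "upper_part r N \<subseteq> {..<r'}"
  shows "N \<subseteq> {..<r + r'}"
proof
  fix i assume "i \<in> N"
  show "i \<in> {..<r + r'}"
  proof (cases "i < r")
    case False
    hence "i - r \<in> upper_part r N" using \<open>i \<in> N\<close> by (intro rev_image_eqI[of i]) auto
    thus ?thesis using assms by auto
  qed simp
qed

lemma card_split_at:
  assumes "finite I"
  shows "card I = card (lower_part p I) + card (upper_part p I)"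
proof -
  have "inj_on (\<lambda>i. i - p) (I - {..<p})" by (rule inj_onI) auto
  hence "card (upper_part p I) = card (I - {..<p})" by (rule card_image)
  thus ?thesis using card_Int_Diff[OF assms] by simp
qed

lemma pick_split_at:
  assumes fin: "finite I" and r: "r < card I"
  shows "pick I r = (if r < card (lower_part p I) then pick (lower_part p I) r
                     else pick (upper_part p I) (r - card (lower_part p I)) + p)"
proof -
  let ?L = "lower_part p I" and ?H = "upper_part p I"
  let ?c = "card ?L"
  define g where "g r = (if r < ?c then pick ?L r else pick ?H (r - ?c) + p)" for r
  have cI: "card I = ?c + card ?H" using card_split_at[OF fin] .
  have "strict_mono_on {0..<card I} g"
  proof (rule strict_mono_onI)
    fix x y assume "x \<in> {0..<card I}" "y \<in> {0..<card I}" "x < y"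
    moreover have "pick ?L x < p" if "x < ?c" using pick_in_set_le[OF that] by simp
    ultimately show "g x < g y" unfolding g_def using cI by (auto simp: pick_mono_le)
  qed
  moreover have "g ` {0..<card I} = I"
  proof -
    have "{0..<card I} = {0..<?c} \<union> (\<lambda>s. s + ?c) ` {0..<card ?H}"
      using cI by (auto simp: image_iff intro: exI[where x = "_ - ?c"])
    moreover have "g ` {0..<?c} = pick ?L ` {0..<?c}"
      unfolding g_def by (rule image_cong) auto
    moreover have "g ` (\<lambda>s. s + ?c) ` {0..<card ?H} = (\<lambda>i. i + p) ` pick ?H ` {0..<card ?H}"
      unfolding g_def image_image by (rule image_cong) auto
    ultimately have "g ` {0..<card I} = pick ?L ` {0..<?c} \<union> (\<lambda>i. i + p) ` pick ?H ` {0..<card ?H}"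
      by (simp add: image_Un)
    also have "\<dots> = ?L \<union> (I - {..<p})"
      using fin by (simp add: pick_image upper_part_shift)
    finally show ?thesis by auto
  qed
  ultimately have "pick I r = g r" using r by (rule pick_eq_strict_mono_enum)
  thus ?thesis unfolding g_def .
qed

lemma pick_split_at_bounded:
  assumes I: "I \<subseteq> {..<p + p'}" and i: "i < card I"
  shows "i < card (lower_part p I) \<Longrightarrow> pick I i = pick (lower_part p I) i \<and> pick (lower_part p I) i < p"
    and "\<not> i < card (lower_part p I) \<Longrightarrow>
      pick I i = pick (upper_part p I) (i - card (lower_part p I)) + p \<and>
      pick (upper_part p I) (i - card (lower_part p I)) < p'"
proof -
  have fin: "finite I" using finite_subset[OF I] by simp
  show "i < card (lower_part p I) \<Longrightarrow> pick I i = pick (lower_part p I) i \<and> pick (lower_part p I) i < p"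
    using pick_split_at[OF fin i, of p] pick_in_set_le[of i "lower_part p I"] by simp
  assume low: "\<not> i < card (lower_part p I)"
  hence "i - card (lower_part p I) < card (upper_part p I)" using card_split_at[OF fin, of p] i by simp
  hence "pick (upper_part p I) (i - card (lower_part p I)) \<in> upper_part p I" by (rule pick_in_set_le)
  moreover have "upper_part p I \<subseteq> {..<p'}" using I by auto
  ultimately show "pick I i = pick (upper_part p I) (i - card (lower_part p I)) + p \<and>
      pick (upper_part p I) (i - card (lower_part p I)) < p'"
    using pick_split_at[OF fin i, of p] low by auto
qed

lemma card_bounded_subset: "I \<subseteq> {..<n} \<Longrightarrow> card {i. i < n \<and> i \<in> I} = card I"
  by (rule arg_cong[of _ _ card]) auto

lemma submatrix_carrier_mat:
  "I \<subseteq> {..<dim_row X} \<Longrightarrow> J \<subseteq> {..<dim_col X} \<Longrightarrow> submatrix X I J \<in> carrier_mat (card I) (card J)"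
  by (rule carrier_matI) (simp_all add: dim_submatrix card_bounded_subset)

lemma submatrix_index_subset:
  assumes "I \<subseteq> {..<dim_row A}" "J \<subseteq> {..<dim_col A}" "i < card I" "j < card J"
  shows "submatrix A I J $$ (i, j) = A $$ (pick I i, pick J j)"
  using assms by (simp add: submatrix_index card_bounded_subset)

lemma submatrix_mult:
  assumes "dim_col X = dim_row Y"
  shows "submatrix (X * Y) I K = submatrix X I UNIV * submatrix Y UNIV K"
proof (rule eq_matI)
  fix i j assume "i < dim_row (submatrix X I UNIV * submatrix Y UNIV K)"
    and "j < dim_col (submatrix X I UNIV * submatrix Y UNIV K)"
  hence i: "i < card {i. i < dim_row X \<and> i \<in> I}" and j: "j < card {j. j < dim_col Y \<and> j \<in> K}"
    by (simp_all add: dim_submatrix)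
  moreover have "pick I i < dim_row X" "pick K j < dim_col Y" using i j pick_le by blast+
  ultimately show "submatrix (X * Y) I K $$ (i, j) = (submatrix X I UNIV * submatrix Y UNIV K) $$ (i, j)"
    using assms by (auto simp: submatrix_index dim_submatrix scalar_prod_def pick_UNIV intro!: sum.cong)
qed (simp_all add: dim_submatrix)

lemma submatrix_submatrix_rows_cols: "submatrix (submatrix X I UNIV) UNIV J = submatrix X I J"
proof (rule eq_matI)
  fix i j assume "i < dim_row (submatrix X I J)" and "j < dim_col (submatrix X I J)"
  hence i: "i < card {i. i < dim_row X \<and> i \<in> I}" and j: "j < card {j. j < dim_col X \<and> j \<in> J}"
    by (simp_all add: dim_submatrix)
  moreover have "pick J j < dim_col X" using j pick_le by blast
  ultimately show "submatrix (submatrix X I UNIV) UNIV J $$ (i, j) = submatrix X I J $$ (i, j)"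
    by (simp add: submatrix_index dim_submatrix pick_UNIV)
qed (simp_all add: dim_submatrix)

lemma submatrix_one_mat_index:
  assumes "I \<subseteq> {..<n}" "J \<subseteq> {..<n}" "i < card I" "j < card J"
  shows "submatrix (1\<^sub>m n) I J $$ (i, j) = (if pick I i = pick J j then 1 else 0)"
proof -
  have "pick I i \<in> I" "pick J j \<in> J" using assms(3,4) by (simp_all add: pick_in_set_le)
  hence "pick I i < n" "pick J j < n" using assms(1,2) by auto
  thus ?thesis using assms by (simp add: submatrix_index_subset)
qed

lemma C_tensor_index:
  assumes "X \<in> carrier_mat p q" "Y \<in> carrier_mat p' q'" "i < p + p'" "j < q + q'"
  shows "C_tensor X Y $$ (i, j) = (if i < p then if j < q then X $$ (i, j) else 0
                                   else if j < q then 0 else Y $$ (i - p, j - q))"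
  using assms unfolding C_tensor_def by (simp add: index_mat_four_block)

lemma C_tensor_carrier_mat:
  "X \<in> carrier_mat p q \<Longrightarrow> Y \<in> carrier_mat p' q' \<Longrightarrow> C_tensor X Y \<in> carrier_mat (p + p') (q + q')"
  unfolding C_tensor_def by auto

lemma submatrix_C_tensor:
  assumes X: "X \<in> carrier_mat p q" and Y: "Y \<in> carrier_mat p' q'"
    and I: "I \<subseteq> {..<p + p'}" and K: "K \<subseteq> {..<q + q'}"
  shows "submatrix (C_tensor X Y) I K =
    C_tensor (submatrix X (lower_part p I) (lower_part q K)) (submatrix Y (upper_part p I) (upper_part q K))"
    (is "_ = C_tensor ?X ?Y")
proof -
  have fin: "finite I" "finite K" using finite_subset[OF I] finite_subset[OF K] by auto
  have XY: "?X \<in> carrier_mat (card (lower_part p I)) (card (lower_part q K))"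
    "?Y \<in> carrier_mat (card (upper_part p I)) (card (upper_part q K))"
    using X Y I K by (auto intro!: submatrix_carrier_mat)
  show ?thesis
  proof (rule eq_matI)
    fix i j assume "i < dim_row (C_tensor ?X ?Y)" "j < dim_col (C_tensor ?X ?Y)"
    hence i: "i < card I" and j: "j < card K"
      using C_tensor_carrier_mat[OF XY] card_split_at[OF fin(1), of p] card_split_at[OF fin(2), of q]
      by auto
    note rows = pick_split_at_bounded[OF I i] and cols = pick_split_at_bounded[OF K j]
    have "pick I i < p + p'" "pick K j < q + q'" using i j I K pick_in_set_le by blast+
    moreover have "lower_part p I \<subseteq> {..<dim_row X}" "lower_part q K \<subseteq> {..<dim_col X}"
      "upper_part p I \<subseteq> {..<dim_row Y}" "upper_part q K \<subseteq> {..<dim_col Y}"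
      using X Y I K by auto
    ultimately show "submatrix (C_tensor X Y) I K $$ (i, j) = C_tensor ?X ?Y $$ (i, j)"
      using X Y I K i j rows cols C_tensor_carrier_mat[OF X Y]
        card_split_at[OF fin(1), of p] card_split_at[OF fin(2), of q]
      by (auto simp: submatrix_index_subset C_tensor_index[OF XY] C_tensor_index[OF X Y])
  qed (use C_tensor_carrier_mat[OF X Y] C_tensor_carrier_mat[OF XY] I K fin
       in \<open>auto simp: dim_submatrix card_bounded_subset card_split_at\<close>)
qed

lemma det_nonsquare: "dim_row A \<noteq> dim_col A \<Longrightarrow> det A = 0"
  unfolding det_def by simp

lemma det_zero_row:
  assumes A: "A \<in> carrier_mat n n" and k: "k < n" and zero: "\<And>j. j < n \<Longrightarrow> A $$ (k, j) = 0"
  shows "det A = 0"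
  unfolding det_def'[OF A]
proof (intro sum.neutral ballI)
  fix p assume "p \<in> {p. p permutes {0..<n}}"
  hence "A $$ (k, p k) = 0" using k zero permutes_in_image by fastforce
  hence "(\<Prod>i = 0..<n. A $$ (i, p i)) = 0" using k by (intro prod_zero) auto
  thus "signof p * (\<Prod>i = 0..<n. A $$ (i, p i)) = 0" by simp
qed

lemma permutes_crosses_blocks:
  fixes r1 r2 s1 s2 :: nat
  assumes p: "p permutes {0..<r1 + r2}" and sq: "r1 + r2 = s1 + s2" and ne: "r1 \<noteq> s1"
  shows "\<exists>i < r1 + r2. (i < r1) \<noteq> (p i < s1)"
proof (rule ccontr)
  let ?N = "r1 + r2"
  assume "\<not> ?thesis"
  hence blocks: "\<And>i. i < ?N \<Longrightarrow> (i < r1) = (p i < s1)" by auto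
  have inj: "inj_on p X" for X using permutes_inj[OF p] by (rule inj_on_subset) simp
  have low: "p ` {0..<r1} \<subseteq> {0..<s1}"
  proof (rule image_subsetI)
    fix i assume "i \<in> {0..<r1}"
    thus "p i \<in> {0..<s1}" using blocks[of i] by simp
  qed
  have high: "p ` {r1..<?N} \<subseteq> {s1..<?N}"
  proof (rule image_subsetI)
    fix i assume "i \<in> {r1..<?N}"
    thus "p i \<in> {s1..<?N}" using blocks[of i] permutes_in_image[OF p, of i] by simp
  qed
  have "r1 \<le> s1" using card_inj_on_le[OF inj low] by simp
  moreover have "?N - r1 \<le> ?N - s1" using card_inj_on_le[OF inj high] by simp
  ultimately show False using sq ne by linarith
qed

lemma det_block_diagonal:
  fixes A B :: "'a :: idom mat"
  shows "det (four_block_mat A (0\<^sub>m (dim_row A) (dim_col B)) (0\<^sub>m (dim_row B) (dim_col A)) B)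
    = det A * det B"
    (is "det ?M = _")
proof (cases "dim_row A = dim_col A \<and> dim_row B = dim_col B")
  case True
  thus ?thesis by (intro det_four_block_mat_upper_right_zero) auto
next
  case False
  let ?N = "dim_row A + dim_row B"
  have "det ?M = 0"
  proof (cases "?N = dim_col A + dim_col B")
    case sq: True
    have M: "?M \<in> carrier_mat ?N ?N" using sq by auto
    show ?thesis unfolding det_def'[OF M]
    proof (intro sum.neutral ballI)
      fix p assume "p \<in> {p. p permutes {0..<?N}}"
      hence p: "p permutes {0..<?N}" by simp
      obtain i where i: "i < ?N" "(i < dim_row A) \<noteq> (p i < dim_col A)"
        using permutes_crosses_blocks[OF p sq] False sq by auto
      have "p i < ?N" using permutes_in_image[OF p] i(1) by simp
      hence "?M $$ (i, p i) = 0" using i sq by (auto simp: index_mat_four_block)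
      hence "(\<Prod>i = 0..<?N. ?M $$ (i, p i)) = 0" using i(1) by (intro prod_zero) auto
      thus "signof p * (\<Prod>i = 0..<?N. ?M $$ (i, p i)) = 0" by simp
    qed
  qed (simp add: det_nonsquare)
  moreover have "det A * det B = 0" using False det_nonsquare by auto
  ultimately show ?thesis by simp
qed

lemma det_C_tensor: "det (C_tensor X Y) = det X * det Y"
  unfolding C_tensor_def by (rule det_block_diagonal)

section \<open>The Cauchy-Binet formula\<close>

text \<open>Normalised to the identity outside \<open>{0..<n}\<close>, the form in which \<open>det_linear_rows_sum\<close>
  expands a determinant.\<close>
definition injective_index_maps :: "nat \<Rightarrow> nat \<Rightarrow> (nat \<Rightarrow> nat) set" where
  "injective_index_maps n m =
     {f. (\<forall>i\<in>{0..<n}. f i \<in> {0..<m}) \<and> (\<forall>i. i \<notin> {0..<n} \<longrightarrow> f i = i) \<and> inj_on f {0..<n}}"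

definition pick_perm :: "nat \<Rightarrow> nat set \<Rightarrow> (nat \<Rightarrow> nat) \<Rightarrow> nat \<Rightarrow> nat" where
  "pick_perm n S p i = (if i < n then pick S (p i) else i)"

lemma pick_perm_injective_index_map:
  assumes S: "S \<subseteq> {0..<m}" "card S = n" and p: "p permutes {0..<n}"
  shows "pick_perm n S p \<in> injective_index_maps n m" and "pick_perm n S p ` {0..<n} = S"
proof -
  have pU: "p i < n" if "i < n" for i using permutes_in_image[OF p] that by simp
  have pick_S: "pick S (p i) \<in> S" if "i < n" for i using pU[OF that] S(2) by (simp add: pick_in_set_le)
  have "pick_perm n S p ` {0..<n} = pick S ` p ` {0..<n}" unfolding pick_perm_def by (auto simp: image_image)
  thus "pick_perm n S p ` {0..<n} = S"
    using permutes_image[OF p] pick_image[OF finite_subset[OF S(1)]] S(2) by simp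
  have "inj_on (pick_perm n S p) {0..<n}"
  proof (rule inj_onI)
    fix x y assume "x \<in> {0..<n}" "y \<in> {0..<n}" "pick_perm n S p x = pick_perm n S p y"
    hence "pick S (p x) = pick S (p y)" "p x \<in> {0..<card S}" "p y \<in> {0..<card S}"
      using pU S(2) unfolding pick_perm_def by auto
    hence "p x = p y" using inj_on_pick by (metis inj_onD)
    thus "x = y" using permutes_inj[OF p] by (metis injD)
  qed
  thus "pick_perm n S p \<in> injective_index_maps n m"
    using pick_S S(1) unfolding injective_index_maps_def pick_perm_def by force
qed

text \<open>The permutation sends \<open>i\<close> to the rank of \<open>f i\<close> in the image of \<open>f\<close>.\<close>
lemma injective_index_map_eq_pick_perm:
  assumes f: "f \<in> injective_index_maps n m"
  obtains p where "p permutes {0..<n}" and "f = pick_perm n (f ` {0..<n}) p"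
proof -
  define T where "T = f ` {0..<n}"
  define p where "p i = (if i < n then card {a\<in>T. a < f i} else i)" for i
  have fO: "\<And>i. \<not> i < n \<Longrightarrow> f i = i" and fi: "inj_on f {0..<n}"
    using f unfolding injective_index_maps_def by auto
  have T: "finite T" "card T = n" unfolding T_def using card_image[OF fi] by auto
  have fT: "f i \<in> T" if "i < n" for i unfolding T_def using that by simp
  have pick_p: "pick T (p i) = f i" if "i < n" for i
    unfolding p_def using that pick_card_in_set[OF fT] by simp
  have "p i \<in> {0..<n}" if "i < n" for i
  proof -
    have "{a\<in>T. a < f i} \<subset> T" using fT[OF that] by blast
    thus ?thesis using psubset_card_mono[OF T(1)] T(2) that unfolding p_def by auto
  qed
  moreover have "inj_on p {0..<n}"
    by (rule inj_onI) (metis atLeastLessThan_iff fi inj_onD pick_p)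
  ultimately have "p permutes {0..<n}"
    by (intro inj_on_nat_permutes) (auto simp: p_def)
  moreover have "f = pick_perm n T p" unfolding pick_perm_def using pick_p fO by auto
  ultimately show thesis unfolding T_def by (rule that)
qed

lemma bij_betw_pick_perm_injective_index_maps:
  "bij_betw (\<lambda>(S, p). pick_perm n S p)
     (Sigma {S. S \<subseteq> {0..<m} \<and> card S = n} (\<lambda>_. {p. p permutes {0..<n}}))
     (injective_index_maps n m)"
proof (rule bij_betwI')
  fix Sp Sp' assume "Sp \<in> Sigma {S. S \<subseteq> {0..<m} \<and> card S = n} (\<lambda>_. {p. p permutes {0..<n}})"
    and "Sp' \<in> Sigma {S. S \<subseteq> {0..<m} \<and> card S = n} (\<lambda>_. {p. p permutes {0..<n}})"
  then obtain S p S' p' where Sp: "Sp = (S, p)" "Sp' = (S', p')" and S: "S \<subseteq> {0..<m}" "card S = n"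
    and S': "S' \<subseteq> {0..<m}" "card S' = n" and p: "p permutes {0..<n}" and p': "p' permutes {0..<n}"
    by auto
  show "((\<lambda>(S, p). pick_perm n S p) Sp = (\<lambda>(S, p). pick_perm n S p) Sp') = (Sp = Sp')"
  proof
    assume "(\<lambda>(S, p). pick_perm n S p) Sp = (\<lambda>(S, p). pick_perm n S p) Sp'"
    hence eq: "pick_perm n S p = pick_perm n S' p'" unfolding Sp by simp
    hence "S = S'" using pick_perm_injective_index_map(2)[OF S p] pick_perm_injective_index_map(2)[OF S' p']
      by simp
    moreover have "p i = p' i" for i
    proof (cases "i < n")
      case True
      hence "pick S (p i) = pick S (p' i)" "p i \<in> {0..<card S}" "p' i \<in> {0..<card S}"
        using fun_cong[OF eq, of i] \<open>S = S'\<close> permutes_in_image[OF p] permutes_in_image[OF p'] S(2)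
        unfolding pick_perm_def by auto
      thus ?thesis using inj_on_pick by (metis inj_onD)
    next
      case False
      thus ?thesis using permutes_not_in[OF p] permutes_not_in[OF p'] by simp
    qed
    ultimately show "Sp = Sp'" unfolding Sp by auto
  qed simp
next
  fix Sp assume "Sp \<in> Sigma {S. S \<subseteq> {0..<m} \<and> card S = n} (\<lambda>_. {p. p permutes {0..<n}})"
  thus "(\<lambda>(S, p). pick_perm n S p) Sp \<in> injective_index_maps n m"
    using pick_perm_injective_index_map(1) by auto
next
  fix f assume f: "f \<in> injective_index_maps n m"
  then obtain p where p: "p permutes {0..<n}" and f_eq: "f = pick_perm n (f ` {0..<n}) p"
    by (rule injective_index_map_eq_pick_perm)
  have "f ` {0..<n} \<subseteq> {0..<m}" "card (f ` {0..<n}) = n"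
    using f card_image[of f "{0..<n}"] unfolding injective_index_maps_def by auto
  with p have "(f ` {0..<n}, p) \<in> Sigma {S. S \<subseteq> {0..<m} \<and> card S = n} (\<lambda>_. {p. p permutes {0..<n}})"
    by simp
  thus "\<exists>Sp \<in> Sigma {S. S \<subseteq> {0..<m} \<and> card S = n} (\<lambda>_. {p. p permutes {0..<n}}).
      f = (\<lambda>(S, p). pick_perm n S p) Sp"
    by (rule bexI[rotated]) (simp only: prod.case f_eq[symmetric])
qed

lemma det_mult_sum_injective_index_maps:
  fixes A B :: "'a :: comm_ring_1 mat"
  assumes A: "A \<in> carrier_mat n m" and B: "B \<in> carrier_mat m n"
  shows "det (A * B) = (\<Sum>f\<in>injective_index_maps n m.
           (\<Prod>i\<in>{0..<n}. A $$ (i, f i)) * det (mat\<^sub>r n n (\<lambda>i. row B (f i))))"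
proof -
  let ?U = "{0..<n}"
  define F where "F = {f. (\<forall>i\<in>?U. f i \<in> {0..<m}) \<and> (\<forall>i. i \<notin> ?U \<longrightarrow> f i = i)}"
  define H where "H f = (\<Prod>i\<in>?U. A $$ (i, f i)) * det (mat\<^sub>r n n (\<lambda>i. row B (f i)))" for f
  have "det (A * B) = (\<Sum>f\<in>F. det (mat\<^sub>r n n (\<lambda>i. A $$ (i, f i) \<cdot>\<^sub>v row B (f i))))"
    unfolding mat_mul_finsum_alt[OF A B] F_def using B by (intro det_linear_rows_sum) auto
  also have "\<dots> = (\<Sum>f\<in>F. H f)"
    unfolding H_def using B by (intro sum.cong refl det_rows_mul) auto
  also have "\<dots> = (\<Sum>f\<in>injective_index_maps n m. H f)"
  proof (rule sum.mono_neutral_right)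
    show "finite F" unfolding F_def by (rule finite_bounded_functions) auto
    show "injective_index_maps n m \<subseteq> F" unfolding F_def injective_index_maps_def by auto
    show "\<forall>f\<in>F - injective_index_maps n m. H f = 0"
    proof
      fix f assume "f \<in> F - injective_index_maps n m"
      then obtain i j where "f i = f j" "i \<noteq> j" "i < n" "j < n"
        unfolding F_def injective_index_maps_def inj_on_def by auto
      hence "det (mat\<^sub>r n n (\<lambda>i. row B (f i))) = 0"
        using B by (intro det_identical_rows[of _ n i j]) auto
      thus "H f = 0" unfolding H_def by simp
    qed
  qed
  finally show ?thesis unfolding H_def .
qed

lemma sum_permutes_pick_eq_det_submatrix:
  fixes A B :: "'a :: comm_ring_1 mat"
  assumes A: "A \<in> carrier_mat n m" and B: "B \<in> carrier_mat m n"
    and S: "S \<subseteq> {0..<m}" "card S = n"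
  shows "(\<Sum>p | p permutes {0..<n}. (\<Prod>i\<in>{0..<n}. A $$ (i, pick S (p i))) *
            det (mat\<^sub>r n n (\<lambda>i. row B (pick S (p i)))))
         = det (submatrix A UNIV S) * det (submatrix B S UNIV)"
proof -
  let ?AS = "submatrix A UNIV S" and ?BS = "submatrix B S UNIV"
  have rows_S: "card {i. i < m \<and> i \<in> S} = n"
    using S card_bounded_subset[of S m] by (simp add: atLeast0LessThan)
  have AS: "?AS \<in> carrier_mat n n" and BS: "?BS \<in> carrier_mat n n"
    using A B rows_S by (auto simp: dim_submatrix)
  have "(\<Prod>i\<in>{0..<n}. A $$ (i, pick S (p i))) = (\<Prod>i\<in>{0..<n}. ?AS $$ (i, p i))"
    if p: "p permutes {0..<n}" for p
    using A permutes_in_image[OF p] rows_S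
    by (intro prod.cong refl) (auto simp: submatrix_index pick_UNIV)
  moreover have "det (mat\<^sub>r n n (\<lambda>i. row B (pick S (p i)))) = signof p * det ?BS"
    if p: "p permutes {0..<n}" for p
  proof -
    have "mat\<^sub>r n n (\<lambda>i. row B (pick S (p i))) = mat n n (\<lambda>(i, j). ?BS $$ (p i, j))"
      using B BS permutes_in_image[OF p] rows_S
      by (intro eq_matI) (auto simp: row_submatrix_UNIV[symmetric])
    thus ?thesis using det_permute_rows[OF BS p] by simp
  qed
  ultimately show ?thesis
    unfolding det_def'[OF AS] sum_distrib_right by (intro sum.cong refl) (auto simp: ac_simps)
qed

lemma cauchy_binet:
  fixes A B :: "'a :: comm_ring_1 mat"
  assumes A: "A \<in> carrier_mat n m" and B: "B \<in> carrier_mat m n"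
  shows "det (A * B) = (\<Sum>S | S \<subseteq> {0..<m} \<and> card S = n.
           det (submatrix A UNIV S) * det (submatrix B S UNIV))"
proof -
  define H where "H f = (\<Prod>i\<in>{0..<n}. A $$ (i, f i)) * det (mat\<^sub>r n n (\<lambda>i. row B (f i)))" for f
  have H_pick_perm: "H (pick_perm n S p) = H (\<lambda>i. pick S (p i))" for S p
    unfolding H_def pick_perm_def
    by (intro arg_cong2[where f = "(*)"] prod.cong arg_cong[where f = det] eq_matI) auto
  have "det (A * B) = (\<Sum>f\<in>injective_index_maps n m. H f)"
    unfolding H_def by (rule det_mult_sum_injective_index_maps[OF A B])
  also have "\<dots> = (\<Sum>(S, p) \<in> Sigma {S. S \<subseteq> {0..<m} \<and> card S = n} (\<lambda>_. {p. p permutes {0..<n}}).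
                    H (pick_perm n S p))"
    using sum.reindex_bij_betw[OF bij_betw_pick_perm_injective_index_maps, of H n m]
    by (simp add: case_prod_beta')
  also have "\<dots> = (\<Sum>S | S \<subseteq> {0..<m} \<and> card S = n. \<Sum>p | p permutes {0..<n}. H (\<lambda>i. pick S (p i)))"
    unfolding H_pick_perm
    by (rule sum.Sigma[symmetric]) (auto intro: finite_subset[of _ "Pow {0..<m}"] finite_permutations)
  also have "\<dots> = (\<Sum>S | S \<subseteq> {0..<m} \<and> card S = n. det (submatrix A UNIV S) * det (submatrix B S UNIV))"
    unfolding H_def using A B by (intro sum.cong refl sum_permutes_pick_eq_det_submatrix) auto
  finally show ?thesis .
qed

section \<open>Minors\<close>

lemma sDet_eq_det_submatrix:
  assumes "I \<subseteq> {..<dim_row X}" and "J \<subseteq> {..<dim_col X}"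
  shows "sDet X I J = det (submatrix X I J)"
  using assms det_nonsquare[of "submatrix X I J"] submatrix_carrier_mat[OF assms]
  unfolding sDet_def by auto

lemma sDet_singleton: "i < dim_row X \<Longrightarrow> j < dim_col X \<Longrightarrow> sDet X {i} {j} = X $$ (i, j)"
proof -
  assume "i < dim_row X" "j < dim_col X"
  hence sub: "{i} \<subseteq> {..<dim_row X}" "{j} \<subseteq> {..<dim_col X}" by auto
  have "pick {i} 0 = i" "pick {j} 0 = j" by (auto intro!: Least_equality)
  thus ?thesis
    using submatrix_carrier_mat[OF sub]
    by (simp add: sDet_eq_det_submatrix[OF sub] det_single submatrix_index_subset[OF sub])
qed

lemma sDet_one_mat: "sDet (1\<^sub>m n) I J = (if I = J \<and> I \<subseteq> {..<n} then 1 else 0)"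
proof (cases "I \<subseteq> {..<n} \<and> J \<subseteq> {..<n} \<and> card I = card J")
  case False thus ?thesis unfolding sDet_def by auto
next
  case True
  hence I: "I \<subseteq> {..<n}" and J: "J \<subseteq> {..<n}" and IJ: "card I = card J" by auto
  have sub: "submatrix (1\<^sub>m n) I J \<in> carrier_mat (card I) (card I)"
    using submatrix_carrier_mat[of I "1\<^sub>m n" J] I J IJ by simp
  show ?thesis
  proof (cases "I = J")
    case True
    have "submatrix (1\<^sub>m n) I I = (1\<^sub>m (card I) :: complex mat)"
      using sub inj_on_pick[of I] unfolding True
      by (intro eq_matI) (auto simp: submatrix_one_mat_index[OF J J] inj_on_eq_iff)
    thus ?thesis using I J True by (simp add: sDet_eq_det_submatrix)
  next
    case False
    then obtain x where x: "x \<in> I" "x \<notin> J"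
      using card_subset_eq[OF finite_subset[OF J] _ IJ] by auto
    define r where "r = card {a\<in>I. a < x}"
    have "{a\<in>I. a < x} \<subset> I" using x by blast
    hence r: "r < card I" unfolding r_def using psubset_card_mono finite_subset[OF I] by blast
    have "pick I r = x" unfolding r_def by (rule pick_card_in_set[OF x(1)])
    moreover have "pick J j \<in> J" if "j < card I" for j using that IJ by (simp add: pick_in_set_le)
    ultimately have "det (submatrix (1\<^sub>m n) I J) = 0"
      using x IJ by (intro det_zero_row[OF sub r]) (auto simp: submatrix_one_mat_index[OF I J r])
    thus ?thesis using I J False by (simp add: sDet_eq_det_submatrix)
  qed
qed

lemma sDet_mult:
  assumes X: "X \<in> carrier_mat c b" and Y: "Y \<in> carrier_mat b a"
  shows "sDet (X * Y) I K = (\<Sum>J\<in>Pow {..<b}. sDet X I J * sDet Y J K)"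
proof -
  have vanish: "sDet X I J * sDet Y J K = 0"
    if "\<not> (I \<subseteq> {..<c} \<and> K \<subseteq> {..<a} \<and> card J = card I \<and> card J = card K)" for J
    using X Y that unfolding sDet_def by auto
  show ?thesis
  proof (cases "I \<subseteq> {..<c} \<and> K \<subseteq> {..<a} \<and> card I = card K")
    case False
    hence "sDet (X * Y) I K = 0" using X Y unfolding sDet_def by auto
    moreover have "(\<Sum>J\<in>Pow {..<b}. sDet X I J * sDet Y J K) = 0"
      using False by (intro sum.neutral ballI vanish) auto
    ultimately show ?thesis by simp
  next
    case True
    hence I: "I \<subseteq> {..<c}" and K: "K \<subseteq> {..<a}" and IK: "card I = card K" by auto
    let ?Sel = "{J. J \<subseteq> {0..<b} \<and> card J = card I}"
    have "submatrix X I UNIV \<in> carrier_mat (card I) b" "submatrix Y UNIV K \<in> carrier_mat b (card I)"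
      using X Y I K IK by (auto simp: dim_submatrix card_bounded_subset)
    note CB = cauchy_binet[OF this, unfolded submatrix_submatrix_rows_cols submatrix_split[symmetric]]
    have "sDet (X * Y) I K = det (submatrix (X * Y) I K)"
      using X Y I K by (intro sDet_eq_det_submatrix) auto
    also have "\<dots> = (\<Sum>J\<in>?Sel. det (submatrix X I J) * det (submatrix Y J K))"
      using X Y by (simp add: submatrix_mult CB)
    also have "\<dots> = (\<Sum>J\<in>?Sel. sDet X I J * sDet Y J K)"
      using X Y I K by (intro sum.cong refl arg_cong2[where f = "(*)"] sDet_eq_det_submatrix[symmetric]) auto
    also have "\<dots> = (\<Sum>J\<in>Pow {..<b}. sDet X I J * sDet Y J K)"
      using I K IK by (intro sum.mono_neutral_left ballI vanish) (auto simp: atLeast0LessThan)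
    finally show ?thesis .
  qed
qed

lemma sDet_C_tensor:
  assumes X: "X \<in> carrier_mat p q" and Y: "Y \<in> carrier_mat p' q'"
  shows "sDet (C_tensor X Y) I K =
    sDet X (lower_part p I) (lower_part q K) * sDet Y (upper_part p I) (upper_part q K)"
proof (cases "I \<subseteq> {..<p + p'} \<and> K \<subseteq> {..<q + q'}")
  case True
  hence I: "I \<subseteq> {..<p + p'}" and K: "K \<subseteq> {..<q + q'}" by auto
  have "lower_part p I \<subseteq> {..<dim_row X}" "lower_part q K \<subseteq> {..<dim_col X}"
    "upper_part p I \<subseteq> {..<dim_row Y}" "upper_part q K \<subseteq> {..<dim_col Y}"
    using X Y I K by auto
  thus ?thesis
    using X Y I K C_tensor_carrier_mat[OF X Y]
    by (simp add: sDet_eq_det_submatrix submatrix_C_tensor det_C_tensor)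
next
  case False
  hence "\<not> (upper_part p I \<subseteq> {..<p'} \<and> upper_part q K \<subseteq> {..<q'})"
    using bounded_if_upper_part_bounded by blast
  hence "sDet Y (upper_part p I) (upper_part q K) = 0" using Y unfolding sDet_def by auto
  moreover have "sDet (C_tensor X Y) I K = 0"
    using False C_tensor_carrier_mat[OF X Y] unfolding sDet_def by auto
  ultimately show ?thesis by simp
qed

lemma sDet_one_mat_eq_D_id: "sDet (1\<^sub>m (length A)) = D_id A"
  unfolding D_id_def by (intro ext) (simp add: sDet_one_mat)

lemma sDet_mult_eq_D_comp:
  assumes "Y \<in> C_hom A B" and "X \<in> C_hom B C"
  shows "sDet (X * Y) = D_comp B (sDet X) (sDet Y)"
  using assms unfolding C_hom_def D_comp_def by (intro ext) (simp add: sDet_mult)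

lemma sDet_C_tensor_eq_D_tensor:
  assumes "X \<in> C_hom A B" and "Y \<in> C_hom A' B'"
  shows "sDet (C_tensor X Y) = D_tensor A B (sDet X) (sDet Y)"
  using assms unfolding C_hom_def D_tensor_def by (intro ext) (simp add: sDet_C_tensor)

lemma inj_on_sDet: "inj_on sDet (C_hom A B)"
proof (rule inj_onI)
  fix X Y assume X: "X \<in> C_hom A B" and Y: "Y \<in> C_hom A B" and eq: "sDet X = sDet Y"
  show "X = Y"
  proof (rule eq_matI)
    fix i j assume "i < dim_row Y" "j < dim_col Y"
    thus "X $$ (i, j) = Y $$ (i, j)"
      using X Y sDet_singleton[of i X j] sDet_singleton[of i Y j] eq unfolding C_hom_def by auto
  qed (use X Y in \<open>auto simp: C_hom_def\<close>)
qed

lemma D_mor_imp_sDet: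
  assumes "(A, B, f) \<in> D_mor"
  shows "\<exists>X \<in> C_hom A B. f = sDet X"
  using assms
proof (induction rule: D_mor.induct)
  case (gen X A B)
  thus ?case by auto
next
  case (comp A B f C g)
  then obtain Y X where "Y \<in> C_hom A B" "X \<in> C_hom B C" "f = sDet Y" "g = sDet X" by auto
  moreover have "X * Y \<in> C_hom A C" using calculation(1,2) unfolding C_hom_def by auto
  ultimately show ?case using sDet_mult_eq_D_comp by metis
next
  case (tens A B f A' B' g)
  then obtain X Y where "X \<in> C_hom A B" "Y \<in> C_hom A' B'" "f = sDet X" "g = sDet Y" by auto
  moreover have "C_tensor X Y \<in> C_hom (A @ A') (B @ B')"
    using calculation(1,2) C_tensor_carrier_mat unfolding C_hom_def by auto
  ultimately show ?case using sDet_C_tensor_eq_D_tensor by metis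
qed

theorem mainTheorem3:
  shows
  \<comment> \<open>sDet maps C(A,B) into D(A,B) (on objects sDet A = V_A, identified with A)\<close>
  "(\<forall>A B X. X \<in> C_hom A B \<longrightarrow> (A, B, sDet X) \<in> D_mor)
   \<comment> \<open>preserves identities\<close>
   \<and> (\<forall>A. sDet (1\<^sub>m (length A)) = D_id A)
   \<comment> \<open>preserves composition\<close>
   \<and> (\<forall>A B C X Y. Y \<in> C_hom A B \<longrightarrow> X \<in> C_hom B C \<longrightarrow>
        sDet (X * Y) = D_comp B (sDet X) (sDet Y))
   \<comment> \<open>strict monoidal: unit to unit, tensor to tensor\<close>
   \<and> sDet (1\<^sub>m 0) = D_id []
   \<and> (\<forall>A B A' B' X Y. X \<in> C_hom A B \<longrightarrow> Y \<in> C_hom A' B' \<longrightarrow>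
        sDet (C_tensor X Y) = D_tensor A B (sDet X) (sDet Y))
   \<comment> \<open>full\<close>
   \<and> (\<forall>A B f. (A, B, f) \<in> D_mor \<longrightarrow> (\<exists>X \<in> C_hom A B. f = sDet X))
   \<comment> \<open>faithful\<close>
   \<and> (\<forall>A B X Y. X \<in> C_hom A B \<longrightarrow> Y \<in> C_hom A B \<longrightarrow> sDet X = sDet Y \<longrightarrow> X = Y)"
  using D_mor.gen sDet_one_mat_eq_D_id sDet_one_mat_eq_D_id[of "[]"] sDet_mult_eq_D_comp
    sDet_C_tensor_eq_D_tensor D_mor_imp_sDet inj_on_sDet[THEN inj_onD]
  by simp_all

end
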